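(* Let $G=(V,E)$ be a connected graph with $\delta(G)\geq 3$ and vertex connectivity $\kappa(G)\geq 2$. Then $V$ can be partitioned into three sets $L$, $R$, $O$ with $|O|\leq 1$ such that every vertex of $L$ has at least two neighbors in $R\cup O$ and every vertex of $R$ has at least two neighbors in $L\cup O$. Moreover, if $G$ contains a cycle of even length, such a partition exists with $O=\emptyset$.
   Context: All graphs are finite and simple. A vertex cut of a connected graph is a set of vertices whose removal leaves a disconnected or trivial graph; $\kappa(G)$ is the minimum size of a vertex cut. *)

theory Defs
  imports Main
begin

definition simple_graph :: "'a set \<Rightarrow> ('a \<Rightarrow> 'a \<Rightarrow> bool) \<Rightarrow> bool" where
  "simple_graph V E \<longleftrightarrow> finite V \<and> (\<forall>u v. E u v \<longrightarrow> u \<in> V \<and> v \<in> V)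
     \<and> (\<forall>u v. E u v \<longrightarrow> E v u) \<and> (\<forall>v. \<not> E v v)"

definition neighbors :: "'a set \<Rightarrow> ('a \<Rightarrow> 'a \<Rightarrow> bool) \<Rightarrow> 'a \<Rightarrow> 'a set" where
  "neighbors V E v = {u \<in> V. E v u}"

definition degree :: "'a set \<Rightarrow> ('a \<Rightarrow> 'a \<Rightarrow> bool) \<Rightarrow> 'a \<Rightarrow> nat" where
  "degree V E v = card (neighbors V E v)"

definition min_degree_ge :: "'a set \<Rightarrow> ('a \<Rightarrow> 'a \<Rightarrow> bool) \<Rightarrow> nat \<Rightarrow> bool" where
  "min_degree_ge V E k \<longleftrightarrow> (\<forall>v \<in> V. k \<le> degree V E v)"

definition connected_graph :: "'a set \<Rightarrow> ('a \<Rightarrow> 'a \<Rightarrow> bool) \<Rightarrow> bool" where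
  "connected_graph V E \<longleftrightarrow> V \<noteq> {} \<and>
     (\<forall>u \<in> V. \<forall>v \<in> V. (\<lambda>x y. x \<in> V \<and> y \<in> V \<and> E x y)\<^sup>*\<^sup>* u v)"

definition vertex_cut :: "'a set \<Rightarrow> ('a \<Rightarrow> 'a \<Rightarrow> bool) \<Rightarrow> 'a set \<Rightarrow> bool" where
  "vertex_cut V E S \<longleftrightarrow> S \<subseteq> V \<and>
     (card (V - S) \<le> 1 \<or> \<not> connected_graph (V - S) E)"

definition vertex_connectivity :: "'a set \<Rightarrow> ('a \<Rightarrow> 'a \<Rightarrow> bool) \<Rightarrow> nat" where
  "vertex_connectivity V E = Min {card S | S. vertex_cut V E S}"

definition is_cycle :: "'a set \<Rightarrow> ('a \<Rightarrow> 'a \<Rightarrow> bool) \<Rightarrow> 'a list \<Rightarrow> bool" where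
  "is_cycle V E cs \<longleftrightarrow> 3 \<le> length cs \<and> distinct cs \<and> set cs \<subseteq> V
     \<and> (\<forall>i < length cs - 1. E (cs ! i) (cs ! (i + 1)))
     \<and> E (last cs) (hd cs)"

definition good_partition :: "'a set \<Rightarrow> ('a \<Rightarrow> 'a \<Rightarrow> bool) \<Rightarrow> 'a set \<Rightarrow> 'a set \<Rightarrow> 'a set \<Rightarrow> bool" where
  "good_partition V E L R Z \<longleftrightarrow>
     L \<union> R \<union> Z = V \<and> L \<inter> R = {} \<and> L \<inter> Z = {} \<and> R \<inter> Z = {} \<and> card Z \<le> 1
     \<and> (\<forall>v \<in> L. 2 \<le> card (neighbors V E v \<inter> (R \<union> Z)))
     \<and> (\<forall>v \<in> R. 2 \<le> card (neighbors V E v \<inter> (L \<union> Z)))"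

end

theory Submission
  imports Defs
begin

text \<open>Take a maximum cut (L, V - L). If a vertex had more neighbours on its own side than
  across, moving it to the other side would enlarge the cut; so every vertex has at least
  half of its neighbours on the opposite side, hence at least two when its degree is at
  least three. Thus O = {} always works.\<close>

lemma simple_graphD:
  assumes "simple_graph V E"
  shows "finite V" and "E u w \<Longrightarrow> u \<in> V" and "E u w \<Longrightarrow> w \<in> V"
    and "E u w \<Longrightarrow> E w u" and "\<not> E u u"
  using assms by (simp_all add: simple_graph_def)

definition cut_edges :: "'a set \<Rightarrow> ('a \<Rightarrow> 'a \<Rightarrow> bool) \<Rightarrow> 'a set \<Rightarrow> ('a \<times> 'a) set" where
  "cut_edges V E L = {(u, w). u \<in> L \<and> w \<in> V - L \<and> E u w}"

lemma finite_cut_edges: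
  assumes "simple_graph V E"
  shows "finite (cut_edges V E L)"
proof (rule finite_subset)
  show "cut_edges V E L \<subseteq> V \<times> V"
    using simple_graphD(2,3)[OF assms] by (auto simp: cut_edges_def)
  show "finite (V \<times> V)"
    using simple_graphD(1)[OF assms] by simp
qed

lemma card_cut_edges_compl:
  assumes "simple_graph V E" "L \<subseteq> V"
  shows "card (cut_edges V E (V - L)) = card (cut_edges V E L)"
proof -
  have "cut_edges V E (V - L) = prod.swap ` cut_edges V E L"
    using assms(2) by (fastforce simp: cut_edges_def image_iff intro: simple_graphD(4)[OF assms(1)])
  then show ?thesis
    by (simp add: card_image)
qed

lemma mem_neighbors_iff:
  assumes "simple_graph V E"
  shows "u \<in> neighbors V E v \<longleftrightarrow> E u v"
  unfolding neighbors_def using simple_graphD[OF assms] by blast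

lemma card_cut_edges_remove:
  assumes G: "simple_graph V E" and "L \<subseteq> V" "v \<in> L"
  shows "card (cut_edges V E L) + card (neighbors V E v \<inter> L)
       = card (cut_edges V E (L - {v})) + card (neighbors V E v \<inter> (V - L))"
proof -
  \<comment> \<open>Moving v out of L keeps the cut edges not starting at v, loses the edges from v
    to V - L and gains the edges from L - {v} to v.\<close>
  define kept where "kept = cut_edges V E L - {v} \<times> V"
  define leaving where "leaving = Pair v ` (neighbors V E v \<inter> (V - L))"
  define entering where "entering = (\<lambda>u. (u, v)) ` (neighbors V E v \<inter> L)"
  have fin_N: "finite (neighbors V E v)"
    using simple_graphD(1)[OF G] by (simp add: neighbors_def)
  have "cut_edges V E L = kept \<union> leaving"
    using \<open>v \<in> L\<close> simple_graphD(3)[OF G]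
    by (auto simp: kept_def leaving_def cut_edges_def neighbors_def)
  moreover have "cut_edges V E (L - {v}) = kept \<union> entering"
    using assms(2,3) simple_graphD(2,5)[OF G]
    by (auto simp: kept_def entering_def cut_edges_def mem_neighbors_iff[OF G])
  moreover have "kept \<inter> leaving = {}" "kept \<inter> entering = {}"
    using \<open>v \<in> L\<close> by (auto simp: kept_def leaving_def entering_def cut_edges_def)
  moreover have "card leaving = card (neighbors V E v \<inter> (V - L))"
    by (simp add: leaving_def card_image inj_on_def)
  moreover have "card entering = card (neighbors V E v \<inter> L)"
    by (simp add: entering_def card_image inj_on_def)
  moreover have "finite kept" "finite leaving" "finite entering"
    using finite_cut_edges[OF G] fin_N by (simp_all add: kept_def leaving_def entering_def)
  ultimately show ?thesis
    by (simp add: card_Un_disjoint)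
qed

lemma maximum_cut_degree_le:
  assumes G: "simple_graph V E" and "L \<subseteq> V" "v \<in> L"
    and max: "\<And>L'. L' \<subseteq> V \<Longrightarrow> card (cut_edges V E L') \<le> card (cut_edges V E L)"
  shows "degree V E v \<le> 2 * card (neighbors V E v \<inter> (V - L))"
proof -
  have "card (cut_edges V E (L - {v})) \<le> card (cut_edges V E L)"
    using \<open>L \<subseteq> V\<close> by (intro max) blast
  then have "card (neighbors V E v \<inter> L) \<le> card (neighbors V E v \<inter> (V - L))"
    using card_cut_edges_remove[OF assms(1-3)] by linarith
  moreover have "neighbors V E v - L = neighbors V E v \<inter> (V - L)"
    by (auto simp: neighbors_def)
  moreover have "finite (neighbors V E v)"
    using simple_graphD(1)[OF G] by (simp add: neighbors_def)
  ultimately show ?thesis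
    unfolding degree_def using card_Int_Diff[of "neighbors V E v" L] by simp
qed

lemma ex_maximum_cut:
  assumes "simple_graph V E"
  obtains L where "L \<subseteq> V" "\<And>L'. L' \<subseteq> V \<Longrightarrow> card (cut_edges V E L') \<le> card (cut_edges V E L)"
proof -
  let ?cut = "\<lambda>L. card (cut_edges V E L)"
  have fin: "finite (?cut ` Pow V)"
    using simple_graphD(1)[OF assms] by simp
  have "Max (?cut ` Pow V) \<in> ?cut ` Pow V"
    using fin by (rule Max_in) (simp add: Pow_not_empty)
  then obtain L where L: "L \<subseteq> V" and max: "Max (?cut ` Pow V) = ?cut L"
    by (auto simp only: image_iff Pow_iff)
  show ?thesis
  proof (rule that[OF L])
    fix L' assume "L' \<subseteq> V"
    then have "?cut L' \<le> Max (?cut ` Pow V)"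
      using fin by (intro Max_ge) auto
    then show "?cut L' \<le> ?cut L"
      by (simp only: max)
  qed
qed

lemma ex_bipartition_half_degree_across:
  assumes G: "simple_graph V E"
  obtains L where "L \<subseteq> V"
    "\<And>v. v \<in> L \<Longrightarrow> degree V E v \<le> 2 * card (neighbors V E v \<inter> (V - L))"
    "\<And>v. v \<in> V - L \<Longrightarrow> degree V E v \<le> 2 * card (neighbors V E v \<inter> L)"
proof -
  obtain L where L: "L \<subseteq> V"
    and max: "\<And>L'. L' \<subseteq> V \<Longrightarrow> card (cut_edges V E L') \<le> card (cut_edges V E L)"
    using ex_maximum_cut[OF G] by blast
  have max_compl: "\<And>L'. L' \<subseteq> V \<Longrightarrow> card (cut_edges V E L') \<le> card (cut_edges V E (V - L))"
    using max card_cut_edges_compl[OF G L] by simp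
  have "V - (V - L) = L"
    using L by blast
  show ?thesis
  proof (rule that[OF L])
    show "degree V E v \<le> 2 * card (neighbors V E v \<inter> (V - L))" if "v \<in> L" for v
      using maximum_cut_degree_le[OF G L that max] .
    show "degree V E v \<le> 2 * card (neighbors V E v \<inter> L)" if "v \<in> V - L" for v
      using maximum_cut_degree_le[OF G Diff_subset that max_compl] \<open>V - (V - L) = L\<close> by simp
  qed
qed

theorem mainTheorem5:
  fixes V :: "'a set" and E :: "'a \<Rightarrow> 'a \<Rightarrow> bool"
  assumes "simple_graph V E"
    and "connected_graph V E"
    and "min_degree_ge V E 3"
    and "vertex_connectivity V E \<ge> 2"
  shows "(\<exists>L R Z. good_partition V E L R Z)
       \<and> ((\<exists>cs. is_cycle V E cs \<and> even (length cs)) \<longrightarrow>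
            (\<exists>L R. good_partition V E L R {}))"
proof -
  obtain L where L: "L \<subseteq> V"
    and left: "\<And>v. v \<in> L \<Longrightarrow> degree V E v \<le> 2 * card (neighbors V E v \<inter> (V - L))"
    and right: "\<And>v. v \<in> V - L \<Longrightarrow> degree V E v \<le> 2 * card (neighbors V E v \<inter> L)"
    using ex_bipartition_half_degree_across[OF assms(1)] by blast
  have deg3: "3 \<le> degree V E v" if "v \<in> V" for v
    using assms(3) that by (simp add: min_degree_ge_def)
  have "2 \<le> card (neighbors V E v \<inter> (V - L))" if "v \<in> L" for v
    using left[OF that] deg3[of v] that L by auto
  moreover have "2 \<le> card (neighbors V E v \<inter> L)" if "v \<in> V - L" for v
    using right[OF that] deg3[of v] that by auto
  ultimately have "good_partition V E L (V - L) {}"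
    using L by (auto simp: good_partition_def)
  then show ?thesis
    by blast
qed

end
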